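(* Let $G$ be a finitely generated group with finite symmetric generating set $S$, and $H\subset G$ a finite index subgroup. For any subset $A\subseteq G/H$, $$\operatorname{sw}(A)\le 6+2\sum_{k=1}^{\infty}\Phi_G\!\left(\tfrac14\left(\tfrac34\right)^k|A|\right)\left(\tfrac34\right)^k|A|.$$
   Context: $G$ carries its Cayley graph structure (an edge between $g$ and $sg$, $s\in S$, $sg\ne g$) and $G/H$ its Schreier graph structure (vertices the cosets $gH$; an edge between distinct cosets $x,y$ iff $y=sx$ for some $s\in S$). For a vertex set $F$ of a graph, $\partial F$ is the set of edges from $F$ to its complement. The Folner profile of $G$ is $\Phi_G(V)=\min\{|\partial F|/|F|: F\subseteq G \text{ finite nonempty}, |F|\le\max(V,1)\}$ for $V>0$ (so $\Phi_G$ is non-increasing and $\Phi_G(V)=\Phi_G(1)$ for $V<1$). For disjoint vertex sets $B_1,B_2$, $E(B_1,B_2)$ is the set of edges between them. A sweepout of a finite vertex set $A$ is a nested sequence $\emptyset=F_0\subseteq\dots\subseteq F_{|A|}=A$ with $|F_j|=j$, of width $\max_j|E(F_j,A\setminus F_j)|$; $\operatorname{sw}(A)$ is the minimum width over all sweepouts of $A$. *)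

theory Defs
  imports "HOL-Algebra.Left_Coset" "HOL-Algebra.Generated_Groups" Complex_Main
begin

definition cayley_edges :: "('g, 'm) monoid_scheme \<Rightarrow> 'g set \<Rightarrow> 'g set set" where
  "cayley_edges G S = {{g, s \<otimes>\<^bsub>G\<^esub> g} | g s. g \<in> carrier G \<and> s \<in> S \<and> s \<otimes>\<^bsub>G\<^esub> g \<noteq> g}"

definition schreier_edges :: "('g, 'm) monoid_scheme \<Rightarrow> 'g set \<Rightarrow> 'g set \<Rightarrow> 'g set set set" where
  "schreier_edges G S H = {{x, s <#\<^bsub>G\<^esub> x} | x s. x \<in> lcosets\<^bsub>G\<^esub> H \<and> s \<in> S \<and> s <#\<^bsub>G\<^esub> x \<noteq> x}"

definition edge_boundary :: "'v set set \<Rightarrow> 'v set \<Rightarrow> 'v set set" where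
  "edge_boundary E F = {e \<in> E. \<exists>u v. e = {u, v} \<and> u \<in> F \<and> v \<notin> F}"

definition edges_between :: "'v set set \<Rightarrow> 'v set \<Rightarrow> 'v set \<Rightarrow> 'v set set" where
  "edges_between E B1 B2 = {e \<in> E. \<exists>u\<in>B1. \<exists>v\<in>B2. e = {u, v}}"

definition folner_profile :: "('g, 'm) monoid_scheme \<Rightarrow> 'g set \<Rightarrow> real \<Rightarrow> real" where
  "folner_profile G S V = Inf {real (card (edge_boundary (cayley_edges G S) F)) / real (card F) | F.
      F \<subseteq> carrier G \<and> finite F \<and> F \<noteq> {} \<and> real (card F) \<le> max V 1}"

definition is_sweepout :: "'v set \<Rightarrow> (nat \<Rightarrow> 'v set) \<Rightarrow> bool" where
  "is_sweepout A F \<longleftrightarrow> F 0 = {} \<and> F (card A) = A \<and>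
     (\<forall>j < card A. F j \<subseteq> F (Suc j)) \<and> (\<forall>j \<le> card A. card (F j) = j)"

definition sweepout_width :: "'v set set \<Rightarrow> 'v set \<Rightarrow> (nat \<Rightarrow> 'v set) \<Rightarrow> nat" where
  "sweepout_width E A F = Max {card (edges_between E (F j) (A - F j)) | j. j \<le> card A}"

definition sweepwidth :: "'v set set \<Rightarrow> 'v set \<Rightarrow> nat" where
  "sweepwidth E A = Inf {sweepout_width E A F | F. is_sweepout A F}"

end

theory Submission
  imports Defs
begin

text \<open>
  Split \<open>B \<subseteq> G/H\<close> at scale \<open>M\<close> using a set \<open>F \<subseteq> G\<close> with \<open>|F| \<le> max (M/4) 1\<close> and
  \<open>|\<partial>F| / |F| = \<Phi>\<^sub>G(M/4)\<close>. For a coset \<open>y\<close>, push the counting measure of \<open>F\<close> to \<open>G/H\<close>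
  along \<open>f \<mapsto> f y\<close> and take its level sets inside \<open>B\<close>. Summed over all \<open>y\<close> and thresholds,
  these level sets have total size \<open>|B| |F|\<close>, while their cuts in \<open>B\<close> total at most \<open>|\<partial>F| |B|\<close>,
  since a Schreier edge is only cut at thresholds between the values at its endpoints and
  the difference is paid for by Cayley boundary edges of \<open>F\<close>. Hence some level set \<open>P\<close>,
  of size at most \<open>|F|\<close>, has \<open>|E(P, B - P)| \<le> \<Phi>\<^sub>G(M/4) |P|\<close>. Accumulating such pieces
  yields \<open>B = B\<^sub>1 \<union> B\<^sub>2\<close> with both parts of size at most \<open>M\<close> and at most \<open>\<Phi>\<^sub>G(M/4) M\<close>
  edges between them.

  Concatenating sweepouts gives \<open>sw(B\<^sub>1 \<union> B\<^sub>2) \<le> max (sw B\<^sub>1) (sw B\<^sub>2) + |E(B\<^sub>1, B\<^sub>2)|\<close>.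
  Recursing with \<open>M\<close> running through \<open>(3/4)\<^sup>k |A|\<close> down to sets of at most five
  elements, whose sweepwidth is at most 6, each scale is charged once along every branch of
  the recursion, so the bound holds even without the factor 2.
\<close>

section \<open>Cuts and sweepouts\<close>

lemma edge_boundaryI: "{u, v} \<in> E \<Longrightarrow> u \<in> F \<Longrightarrow> v \<notin> F \<Longrightarrow> {u, v} \<in> edge_boundary E F"
  unfolding edge_boundary_def by auto

lemma finite_edges_between:
  assumes "finite X" "finite Y"
  shows "finite (edges_between E X Y)"
proof -
  have "edges_between E X Y \<subseteq> (\<lambda>(u, v). {u, v}) ` (X \<times> Y)"
    unfolding edges_between_def by auto
  then show ?thesis
    using assms by (meson finite_SigmaI finite_imageI finite_subset)
qed

lemma card_edges_between_le_mult:
  assumes "finite X" "finite Y"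
  shows "card (edges_between E X Y) \<le> card X * card Y"
proof -
  have "edges_between E X Y \<subseteq> (\<lambda>(u, v). {u, v}) ` (X \<times> Y)"
    unfolding edges_between_def by auto
  then have "card (edges_between E X Y) \<le> card ((\<lambda>(u, v). {u, v}) ` (X \<times> Y))"
    using assms by (intro card_mono) auto
  also have "\<dots> \<le> card (X \<times> Y)"
    by (rule card_image_le) (use assms in auto)
  finally show ?thesis
    by (simp add: card_cartesian_product)
qed

lemma card_edges_between_mono:
  assumes "X \<subseteq> X'" "Y \<subseteq> Y'" "finite X'" "finite Y'"
  shows "card (edges_between E X Y) \<le> card (edges_between E X' Y')"
  using assms by (intro card_mono finite_edges_between) (auto simp: edges_between_def)

lemma edges_between_Un_right:
  "edges_between E X (Y \<union> Z) = edges_between E X Y \<union> edges_between E X Z"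
  by (auto simp: edges_between_def)

lemma card_edges_between_Un_le:
  assumes "X \<subseteq> B" "Y \<subseteq> B" "finite B"
  shows "card (edges_between E (X \<union> Y) (B - (X \<union> Y)))
    \<le> card (edges_between E X (B - X)) + card (edges_between E Y (B - X - Y))"
proof -
  have fin: "finite X" "finite Y"
    using assms finite_subset by blast+
  have "edges_between E (X \<union> Y) (B - (X \<union> Y))
      \<subseteq> edges_between E X (B - X) \<union> edges_between E Y (B - X - Y)"
    unfolding edges_between_def by auto
  then have "card (edges_between E (X \<union> Y) (B - (X \<union> Y)))
      \<le> card (edges_between E X (B - X) \<union> edges_between E Y (B - X - Y))"
    using fin assms(3) by (intro card_mono finite_UnI finite_edges_between) auto
  also have "\<dots> \<le> card (edges_between E X (B - X)) + card (edges_between E Y (B - X - Y))"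
    by (rule card_Un_le)
  finally show ?thesis .
qed

lemma card_edges_between_Diff_Un_le:
  assumes "X \<subseteq> B1" "finite B1" "finite B2" "B1 \<inter> B2 = {}"
  shows "card (edges_between E X (B1 \<union> B2 - X))
    \<le> card (edges_between E X (B1 - X)) + card (edges_between E B1 B2)"
proof -
  have "B1 \<union> B2 - X = (B1 - X) \<union> B2"
    using assms(1,4) by blast
  then have "card (edges_between E X (B1 \<union> B2 - X))
      \<le> card (edges_between E X (B1 - X)) + card (edges_between E X B2)"
    by (simp add: edges_between_Un_right card_Un_le)
  also have "card (edges_between E X B2) \<le> card (edges_between E B1 B2)"
    using assms by (intro card_edges_between_mono) auto
  finally show ?thesis
    by simp
qed

lemma card_threshold_cuts_le:
  fixes \<psi> :: "'v \<Rightarrow> nat"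
  shows "card {t \<in> T. {u, v} \<in> edges_between E {x \<in> B. t \<le> \<psi> x} (B - {x \<in> B. t \<le> \<psi> x})}
    \<le> (\<psi> u - \<psi> v) + (\<psi> v - \<psi> u)"
proof -
  have "{t \<in> T. {u, v} \<in> edges_between E {x \<in> B. t \<le> \<psi> x} (B - {x \<in> B. t \<le> \<psi> x})}
      \<subseteq> {\<psi> v<..\<psi> u} \<union> {\<psi> u<..\<psi> v}"
    unfolding edges_between_def by (auto simp: doubleton_eq_iff)
  then have "card {t \<in> T. {u, v} \<in> edges_between E {x \<in> B. t \<le> \<psi> x} (B - {x \<in> B. t \<le> \<psi> x})}
      \<le> card ({\<psi> v<..\<psi> u} \<union> {\<psi> u<..\<psi> v})"
    by (intro card_mono) auto
  also have "\<dots> \<le> (\<psi> u - \<psi> v) + (\<psi> v - \<psi> u)"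
    using card_Un_le[of "{\<psi> v<..\<psi> u}" "{\<psi> u<..\<psi> v}"] by simp
  finally show ?thesis .
qed

lemma is_sweepout_mono:
  assumes "is_sweepout A F" "i \<le> k" "k \<le> card A"
  shows "F i \<subseteq> F k"
  using assms(2,3)
proof (induction k)
  case (Suc k)
  show ?case
  proof (cases "i = Suc k")
    case False
    then have "F i \<subseteq> F k"
      using Suc by simp
    also have "F k \<subseteq> F (Suc k)"
      using assms(1) Suc.prems unfolding is_sweepout_def by simp
    finally show ?thesis .
  qed simp
qed simp

lemma is_sweepout_subset:
  assumes "is_sweepout A F" "j \<le> card A"
  shows "F j \<subseteq> A"
  using is_sweepout_mono[OF assms order_refl] assms(1) unfolding is_sweepout_def by simp

lemma is_sweepout_take:
  assumes "distinct xs"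
  shows "is_sweepout (set xs) (\<lambda>j. set (take j xs))"
proof -
  have "card (set xs) = length xs"
    using assms by (rule distinct_card)
  moreover have "card (set (take j xs)) = j" if "j \<le> length xs" for j
    using assms that by (simp add: distinct_card min_absorb2)
  ultimately show ?thesis
    unfolding is_sweepout_def by (simp add: set_take_subset_set_take)
qed

lemma ex_sweepout:
  assumes "finite A"
  obtains F where "is_sweepout A F"
  using is_sweepout_take finite_distinct_list[OF assms] by metis

lemma sweepout_width_le:
  assumes "\<And>j. j \<le> card A \<Longrightarrow> card (edges_between E (F j) (A - F j)) \<le> w"
  shows "sweepout_width E A F \<le> w"
  unfolding sweepout_width_def using assms
  by (subst Max_le_iff) (auto simp: setcompr_eq_image)

lemma card_edges_between_le_sweepout_width:
  assumes "j \<le> card A"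
  shows "card (edges_between E (F j) (A - F j)) \<le> sweepout_width E A F"
  unfolding sweepout_width_def using assms by (intro Max_ge) (auto simp: setcompr_eq_image)

lemma sweepwidth_le:
  assumes "is_sweepout A F"
  shows "sweepwidth E A \<le> sweepout_width E A F"
  unfolding sweepwidth_def using assms by (intro cInf_lower) auto

lemma ex_optimal_sweepout:
  assumes "finite A"
  obtains F where "is_sweepout A F" "sweepwidth E A = sweepout_width E A F"
proof -
  obtain F0 where "is_sweepout A F0"
    using ex_sweepout[OF assms] .
  then have "sweepwidth E A \<in> {sweepout_width E A F | F. is_sweepout A F}"
    unfolding sweepwidth_def by (intro Inf_nat_def1) blast
  then show ?thesis
    using that by blast
qed

lemma sweepwidth_le_6:
  assumes "finite A" "card A \<le> 5"
  shows "sweepwidth E A \<le> 6"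
proof -
  obtain F where F: "is_sweepout A F"
    using ex_sweepout[OF assms(1)] .
  have "sweepout_width E A F \<le> 6"
  proof (rule sweepout_width_le)
    fix j assume j: "j \<le> card A"
    have sub: "F j \<subseteq> A" and card: "card (F j) = j"
      using is_sweepout_subset[OF F j] F j unfolding is_sweepout_def by auto
    then have "finite (F j)"
      using assms(1) finite_subset by blast
    then have "card (edges_between E (F j) (A - F j)) \<le> j * (card A - j)"
      using card_edges_between_le_mult[of "F j" "A - F j" E] sub card assms(1)
      by (simp add: card_Diff_subset)
    also have "\<dots> \<le> j * (5 - j)"
      using assms(2) by (simp add: diff_le_mono)
    also have "\<dots> \<le> 6"
      using j assms(2) by (auto simp: le_Suc_eq numeral_eq_Suc)
    finally show "card (edges_between E (F j) (A - F j)) \<le> 6" .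
  qed
  then show ?thesis
    using sweepwidth_le[OF F, of E] by simp
qed

lemma is_sweepout_append:
  assumes F1: "is_sweepout B1 F1" and F2: "is_sweepout B2 F2"
    and fin: "finite B1" "finite B2" and disj: "B1 \<inter> B2 = {}"
  shows "is_sweepout (B1 \<union> B2) (\<lambda>j. if j \<le> card B1 then F1 j else B1 \<union> F2 (j - card B1))"
  unfolding is_sweepout_def
proof (intro conjI allI impI)
  let ?F = "\<lambda>j. if j \<le> card B1 then F1 j else B1 \<union> F2 (j - card B1)"
  have card_Un: "card (B1 \<union> B2) = card B1 + card B2"
    using fin disj by (simp add: card_Un_disjoint)
  show "?F 0 = {}" "?F (card (B1 \<union> B2)) = B1 \<union> B2"
    using F1 F2 card_Un unfolding is_sweepout_def by auto
  fix j
  show "?F j \<subseteq> ?F (Suc j)" if j: "j < card (B1 \<union> B2)"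
  proof -
    consider "j < card B1" | "j = card B1" | "card B1 < j" "j - card B1 < card B2"
      using j card_Un by atomize_elim arith
    then show ?thesis
      using F1 F2 unfolding is_sweepout_def by cases (auto simp: Suc_diff_le)
  qed
  show "card (?F j) = j" if "j \<le> card (B1 \<union> B2)"
  proof (cases "j \<le> card B1")
    case False
    then have "F2 (j - card B1) \<subseteq> B2" "card (F2 (j - card B1)) = j - card B1"
      using that card_Un is_sweepout_subset[OF F2] F2 unfolding is_sweepout_def by auto
    moreover have "finite (F2 (j - card B1))"
      using calculation(1) fin(2) finite_subset by blast
    ultimately have "card (B1 \<union> F2 (j - card B1)) = card B1 + (j - card B1)"
      using fin(1) disj by (subst card_Un_disjoint) auto
    then show ?thesis
      using False by simp
  qed (use F1 in \<open>simp add: is_sweepout_def\<close>)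
qed

lemma sweepwidth_Un_le:
  assumes fin: "finite B1" "finite B2" and disj: "B1 \<inter> B2 = {}"
  shows "sweepwidth E (B1 \<union> B2)
    \<le> max (sweepwidth E B1) (sweepwidth E B2) + card (edges_between E B1 B2)"
proof -
  obtain F1 where F1: "is_sweepout B1 F1" "sweepwidth E B1 = sweepout_width E B1 F1"
    using ex_optimal_sweepout[OF fin(1)] .
  obtain F2 where F2: "is_sweepout B2 F2" "sweepwidth E B2 = sweepout_width E B2 F2"
    using ex_optimal_sweepout[OF fin(2)] .
  define F where "F j = (if j \<le> card B1 then F1 j else B1 \<union> F2 (j - card B1))" for j
  have F: "is_sweepout (B1 \<union> B2) F"
    unfolding F_def using is_sweepout_append[OF F1(1) F2(1) fin disj] .
  have "sweepout_width E (B1 \<union> B2) F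
    \<le> max (sweepwidth E B1) (sweepwidth E B2) + card (edges_between E B1 B2)"
  proof (rule sweepout_width_le)
    fix j assume j: "j \<le> card (B1 \<union> B2)"
    show "card (edges_between E (F j) (B1 \<union> B2 - F j))
      \<le> max (sweepwidth E B1) (sweepwidth E B2) + card (edges_between E B1 B2)"
    proof (cases "j \<le> card B1")
      case True
      then have "card (edges_between E (F j) (B1 \<union> B2 - F j))
          \<le> card (edges_between E (F1 j) (B1 - F1 j)) + card (edges_between E B1 B2)"
        unfolding F_def using card_edges_between_Diff_Un_le[OF is_sweepout_subset[OF F1(1) True] fin disj]
        by simp
      also have "card (edges_between E (F1 j) (B1 - F1 j)) \<le> sweepwidth E B1"
        unfolding F1(2) using True by (rule card_edges_between_le_sweepout_width)
      finally show ?thesis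
        by simp
    next
      case False
      define i where "i = j - card B1"
      have i: "i \<le> card B2"
        using j False fin disj unfolding i_def by (simp add: card_Un_disjoint)
      have sub: "F2 i \<subseteq> B2"
        using is_sweepout_subset[OF F2(1) i] .
      have "B1 \<union> B2 - B1 = B2"
        using disj by blast
      then have "card (edges_between E (F j) (B1 \<union> B2 - F j))
          \<le> card (edges_between E B1 B2) + card (edges_between E (F2 i) (B2 - F2 i))"
        using card_edges_between_Un_le[of B1 "B1 \<union> B2" "F2 i" E] sub fin False
        unfolding F_def i_def by auto
      also have "card (edges_between E (F2 i) (B2 - F2 i)) \<le> sweepwidth E B2"
        unfolding F2(2) using i by (rule card_edges_between_le_sweepout_width)
      finally show ?thesis
        by simp
    qed
  qed
  then show ?thesis
    using sweepwidth_le[OF F, of E] by simp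
qed

lemma ex_ratio_le_of_sums:
  fixes a b :: "'i \<Rightarrow> nat"
  assumes "finite I" "0 < sum a I" "c * sum b I \<le> d * sum a I"
  shows "\<exists>i\<in>I. 0 < a i \<and> c * b i \<le> d * a i"
proof (rule ccontr)
  assume none: "\<not> ?thesis"
  then have le: "d * a i \<le> c * b i" if "i \<in> I" for i
    using that by (cases "a i = 0") auto
  have "\<exists>i\<in>I. a i \<noteq> 0"
    using assms(2) sum.neutral[of I a] by (metis less_irrefl)
  then obtain i where i: "i \<in> I" "0 < a i"
    by blast
  then have "d * a i < c * b i"
    using none by auto
  then have "(\<Sum>i\<in>I. d * a i) < (\<Sum>i\<in>I. c * b i)"
    using assms(1) le i by (intro sum_strict_mono_ex1) auto
  then show False
    using assms(3) by (simp add: sum_distrib_left)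
qed

lemma ex_power_bracket:
  fixes b c q :: real
  assumes "0 < b" "b \<le> c * q ^ j" "0 \<le> q" "q < 1"
  obtains i where "j \<le> i" "b \<le> c * q ^ i" "c * q ^ Suc i < b"
proof -
  have "0 < c"
  proof (rule ccontr)
    assume "\<not> 0 < c"
    then have "c * q ^ j \<le> 0"
      using assms(3) by (simp add: mult_nonpos_nonneg)
    then show False
      using assms(1,2) by linarith
  qed
  obtain n where n: "q ^ n < b / c"
    using real_arch_pow_inv[of "b / c" q] assms(1,4) \<open>0 < c\<close> by auto
  have "c * q ^ (j + n) \<le> c * q ^ n"
    using assms(3,4) \<open>0 < c\<close> by (intro mult_left_mono power_decreasing) auto
  also have "\<dots> < b"
    using n \<open>0 < c\<close> by (simp add: field_simps)
  finally have "\<exists>n. c * q ^ (j + n) < b" ..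
  then obtain m where "\<not> c * q ^ (j + m) < b" "c * q ^ (j + Suc m) < b"
    using exists_least_lemma[of "\<lambda>m. c * q ^ (j + m) < b"] assms(2) by auto
  then show ?thesis
    using that[of "j + m"] by simp
qed

lemma suminf_shift_Suc_le:
  fixes f :: "nat \<Rightarrow> real"
  assumes "summable f" "\<And>n. 0 \<le> f n" "j \<le> i"
  shows "f i + (\<Sum>n. f (n + Suc i)) \<le> (\<Sum>n. f (n + j))"
proof -
  have "sum f {..<j} \<le> sum f {..<i}"
    using assms(2,3) by (intro sum_mono2) auto
  moreover have "(\<Sum>n. f (n + Suc i)) = suminf f - sum f {..<Suc i}"
    by (rule suminf_minus_initial_segment[OF assms(1)])
  moreover have "(\<Sum>n. f (n + j)) = suminf f - sum f {..<j}"
    by (rule suminf_minus_initial_segment[OF assms(1)])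
  ultimately show ?thesis
    using sum.lessThan_Suc[of f i] by linarith
qed

section \<open>Cayley graphs and the Folner profile\<close>

locale cayley_graph = group G for G :: "('g, 'm) monoid_scheme" (structure) +
  fixes S :: "'g set"
  assumes finite_S: "finite S" and S_carrier: "S \<subseteq> carrier G"
begin

abbreviation cayley_boundary :: "'g set \<Rightarrow> 'g set set" where
  "cayley_boundary F \<equiv> edge_boundary (cayley_edges G S) F"

lemma cayley_edge:
  assumes "g \<in> carrier G" "s \<in> S" "s \<otimes> g \<noteq> g"
  shows "{g, s \<otimes> g} \<in> cayley_edges G S"
  using assms unfolding cayley_edges_def by blast

lemma cayley_edge_sym:
  assumes g: "g \<in> carrier G" and a: "a \<in> carrier G" "a \<in> S \<or> inv a \<in> S"
    and ne: "a \<otimes> g \<noteq> g"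
  shows "{g, a \<otimes> g} \<in> cayley_edges G S"
  using a(2)
proof
  assume "inv a \<in> S"
  moreover have "inv a \<otimes> (a \<otimes> g) = g"
    using a g by (simp add: m_assoc [symmetric])
  ultimately show ?thesis
    using cayley_edge[of "a \<otimes> g" "inv a"] a g ne by (simp add: insert_commute)
qed (use cayley_edge g ne in blast)

lemma edge_boundary_cayley_subset:
  "cayley_boundary F
    \<subseteq> (\<lambda>(f, s). {f, s \<otimes> f}) ` (F \<times> S) \<union> (\<lambda>(f, s). {f, inv s \<otimes> f}) ` (F \<times> S)"
proof
  fix c assume c: "c \<in> cayley_boundary F"
  then obtain g s where gs: "c = {g, s \<otimes> g}" "g \<in> carrier G" "s \<in> S"
    unfolding edge_boundary_def cayley_edges_def by auto
  obtain u v where uv: "c = {u, v}" "u \<in> F" "v \<notin> F"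
    using c unfolding edge_boundary_def by auto
  have sG: "s \<in> carrier G"
    using gs(3) S_carrier by blast
  consider "u = g" | "u = s \<otimes> g"
    using uv gs by auto
  then show "c \<in> (\<lambda>(f, s). {f, s \<otimes> f}) ` (F \<times> S) \<union> (\<lambda>(f, s). {f, inv s \<otimes> f}) ` (F \<times> S)"
  proof cases
    case 1
    then show ?thesis
      using gs uv by auto
  next
    case 2
    then have "c = {u, inv s \<otimes> u}"
      using gs sG by (simp add: m_assoc [symmetric] insert_commute)
    then show ?thesis
      using uv gs by auto
  qed
qed

lemma finite_edge_boundary_cayley:
  "finite F \<Longrightarrow> finite (cayley_boundary F)"
  using edge_boundary_cayley_subset[of F] finite_S
  by (meson finite_SigmaI finite_Un finite_imageI finite_subset)

lemma card_edge_boundary_cayley_le: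
  assumes "finite F"
  shows "card (cayley_boundary F) \<le> 2 * card S * card F"
proof -
  have "card (cayley_boundary F)
      \<le> card ((\<lambda>(f, s). {f, s \<otimes> f}) ` (F \<times> S)) + card ((\<lambda>(f, s). {f, inv s \<otimes> f}) ` (F \<times> S))"
    using edge_boundary_cayley_subset[of F] assms finite_S
    by (meson card_Un_le card_mono finite_SigmaI finite_Un finite_imageI order_trans)
  also have "\<dots> \<le> card (F \<times> S) + card (F \<times> S)"
    by (intro add_mono card_image_le) (use assms finite_S in auto)
  finally show ?thesis
    by (simp add: card_cartesian_product algebra_simps)
qed

lemma folner_profile_attained:
  obtains F where "F \<subseteq> carrier G" "finite F" "F \<noteq> {}" "real (card F) \<le> max V 1"
    "real (card (cayley_boundary F)) / real (card F) = folner_profile G S V"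
proof -
  define Fs where "Fs = {F. F \<subseteq> carrier G \<and> finite F \<and> F \<noteq> {} \<and> real (card F) \<le> max V 1}"
  define ratio where "ratio F = real (card (cayley_boundary F)) / real (card F)" for F
  have profile: "folner_profile G S V = Inf (ratio ` Fs)"
    unfolding folner_profile_def ratio_def Fs_def by (simp add: setcompr_eq_image)
  define m where "m = nat \<lceil>max V 1\<rceil>"
  define K where "K = (2 * card S + 1) * m"
  have "ratio ` Fs \<subseteq> (\<lambda>(a, b). real a / real b) ` ({..K} \<times> {..K})"
  proof
    fix r assume "r \<in> ratio ` Fs"
    then obtain F where r: "r = ratio F" and F: "finite F" "real (card F) \<le> max V 1"
      unfolding Fs_def by blast
    then have m: "card F \<le> m"
      unfolding m_def by linarith
    have "card (cayley_boundary F) \<le> 2 * card S * m"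
      using card_edge_boundary_cayley_le[OF F(1)] mult_le_mono2[OF m] by (rule le_trans)
    then have "card (cayley_boundary F) \<le> K" "card F \<le> K"
      using m unfolding K_def by (simp_all add: distrib_right trans_le_add2)
    then show "r \<in> (\<lambda>(a, b). real a / real b) ` ({..K} \<times> {..K})"
      unfolding r ratio_def by force
  qed
  then have fin: "finite (ratio ` Fs)"
    by (rule finite_subset) simp
  have "{\<one>} \<in> Fs"
    unfolding Fs_def by simp
  then have ne: "ratio ` Fs \<noteq> {}"
    by blast
  have "Inf (ratio ` Fs) \<in> ratio ` Fs"
    using Min_in[OF fin ne] cInf_eq_Min[OF fin ne] by simp
  then obtain F where "F \<in> Fs" "ratio F = folner_profile G S V"
    unfolding profile by auto
  then show ?thesis
    using that unfolding Fs_def ratio_def by blast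
qed

lemma folner_profile_nonneg: "0 \<le> folner_profile G S V"
  by (rule folner_profile_attained[of V]) (metis divide_nonneg_nonneg of_nat_0_le_iff)

lemma folner_profile_le: "folner_profile G S V \<le> 2 * real (card S)"
proof (rule folner_profile_attained[of V])
  fix F assume F: "finite F" "F \<noteq> {}"
    and eq: "real (card (cayley_boundary F)) / real (card F) = folner_profile G S V"
  have "real (card (cayley_boundary F)) \<le> 2 * real (card S) * real (card F)"
    using card_edge_boundary_cayley_le[OF F(1)] by (metis of_nat_le_iff of_nat_mult of_nat_numeral)
  moreover have "0 < real (card F)"
    using F by (simp add: card_gt_0_iff)
  ultimately show ?thesis
    unfolding eq [symmetric] by (simp add: pos_divide_le_eq)
qed

end

section \<open>Level sets of push-forwards in the Schreier graph\<close>

locale schreier_graph = cayley_graph G S for G :: "('g, 'm) monoid_scheme" (structure) and S +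
  fixes H :: "'g set"
  assumes subgroup_H: "subgroup H G" and finite_lcosets: "finite (lcosets H)"
begin

abbreviation schreier :: "'g set set set" where
  "schreier \<equiv> schreier_edges G S H"

lemma lcosets_subset_carrier: "y \<in> lcosets H \<Longrightarrow> y \<subseteq> carrier G"
  using subgroup.lcosets_carrier[OF subgroup_H is_group] .

lemma l_coset_in_lcosets:
  assumes "g \<in> carrier G" "y \<in> lcosets H"
  shows "g <# y \<in> lcosets H"
proof -
  obtain a where a: "a \<in> carrier G" "y = a <# H"
    using assms(2) unfolding LCOSETS_def by auto
  then have "g <# y = (g \<otimes> a) <# H"
    using assms(1) lcos_m_assoc subgroup.subset[OF subgroup_H] by auto
  then show ?thesis
    using a assms(1) unfolding LCOSETS_def by auto
qed

lemma lcos_inv_cancel: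
  assumes "g \<in> carrier G" "y \<in> lcosets H"
  shows "inv g <# (g <# y) = y" "g <# (inv g <# y) = y"
  using assms lcos_m_assoc lcos_mult_one lcosets_subset_carrier by auto

lemma card_lcosets_moved_to:
  assumes "f \<in> carrier G" "x \<in> lcosets H"
  shows "card {y \<in> lcosets H. f <# y = x} = 1"
proof -
  have "{y \<in> lcosets H. f <# y = x} = {inv f <# x}"
    using assms lcos_inv_cancel l_coset_in_lcosets by auto
  then show ?thesis
    by simp
qed

lemma card_lcosets_moved_into_le:
  assumes "a \<in> carrier G" "finite B"
  shows "card {y \<in> lcosets H. a <# y \<in> B} \<le> card B"
proof -
  have "{y \<in> lcosets H. a <# y \<in> B} \<subseteq> (\<lambda>x. inv a <# x) ` B"
    using assms(1) lcos_inv_cancel(1) by force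
  then show ?thesis
    using assms(2) by (meson card_image_le card_mono finite_imageI order_trans)
qed

text \<open>The level sets of this push-forward of the counting measure on \<open>F\<close> are the candidate
  pieces of small boundary in the Schreier graph.\<close>
definition push_count :: "'g set \<Rightarrow> 'g set \<Rightarrow> 'g set \<Rightarrow> nat" where
  "push_count F y x = card {f \<in> F. f <# y = x}"

definition level_set :: "'g set \<Rightarrow> 'g set set \<Rightarrow> 'g set \<Rightarrow> nat \<Rightarrow> 'g set set" where
  "level_set F B y t = {x \<in> B. t \<le> push_count F y x}"

lemma lcos_mult_moved:
  assumes "y \<in> lcosets H" "a \<in> carrier G" "f \<in> carrier G" "f <# y = u"
  shows "(a \<otimes> f) <# y = a <# u"
  using assms lcos_m_assoc[OF lcosets_subset_carrier] by auto

lemma card_escaping_le_boundary: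
  assumes F: "F \<subseteq> carrier G" "finite F" and y: "y \<in> lcosets H"
    and a: "a \<in> carrier G" "a \<in> S \<or> inv a \<in> S" and ne: "a <# u \<noteq> u"
  shows "card {f \<in> F. f <# y = u \<and> a \<otimes> f \<notin> F}
    \<le> card {c \<in> cayley_boundary F. (\<lambda>g. g <# y) ` c = {u, a <# u}}"
proof -
  let ?Fout = "{f \<in> F. f <# y = u \<and> a \<otimes> f \<notin> F}"
  have "card ?Fout = card ((\<lambda>f. {f, a \<otimes> f}) ` ?Fout)"
    by (intro card_image[symmetric] inj_onI) (auto simp: doubleton_eq_iff)
  also have "\<dots> \<le> card {c \<in> cayley_boundary F. (\<lambda>g. g <# y) ` c = {u, a <# u}}"
  proof (intro card_mono subsetI)
    show "finite {c \<in> cayley_boundary F. (\<lambda>g. g <# y) ` c = {u, a <# u}}"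
      using finite_edge_boundary_cayley[OF F(2)] by simp
    fix c assume "c \<in> (\<lambda>f. {f, a \<otimes> f}) ` ?Fout"
    then obtain f where f: "f \<in> F" "a \<otimes> f \<notin> F" and fu: "f <# y = u" and c: "c = {f, a \<otimes> f}"
      by auto
    have fG: "f \<in> carrier G"
      using f(1) F(1) by blast
    have afu: "(a \<otimes> f) <# y = a <# u"
      using lcos_mult_moved[OF y a(1) fG fu] .
    then have "a \<otimes> f \<noteq> f"
      using ne fu by metis
    then have "c \<in> cayley_edges G S"
      unfolding c by (rule cayley_edge_sym[OF fG a])
    then have "c \<in> cayley_boundary F"
      unfolding c using f by (rule edge_boundaryI)
    moreover have "(\<lambda>g. g <# y) ` c = {u, a <# u}"
      unfolding c using fu afu by simp
    ultimately show "c \<in> {c \<in> cayley_boundary F. (\<lambda>g. g <# y) ` c = {u, a <# u}}"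
      by blast
  qed
  finally show ?thesis .
qed

text \<open>An element of \<open>F\<close> over \<open>u\<close> is either moved by \<open>a\<close> to an element of \<open>F\<close> over \<open>a u\<close>, or
  leaves \<open>F\<close> along a boundary edge lying over the Schreier edge \<open>{u, a u}\<close>.\<close>
lemma push_count_diff_le:
  assumes F: "F \<subseteq> carrier G" "finite F" and y: "y \<in> lcosets H"
    and a: "a \<in> carrier G" "a \<in> S \<or> inv a \<in> S" and ne: "a <# u \<noteq> u"
  shows "push_count F y u - push_count F y (a <# u)
    \<le> card {c \<in> cayley_boundary F. (\<lambda>g. g <# y) ` c = {u, a <# u}}"
proof -
  define Fin where "Fin = {f \<in> F. f <# y = u \<and> a \<otimes> f \<in> F}"
  define Fout where "Fout = {f \<in> F. f <# y = u \<and> a \<otimes> f \<notin> F}"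
  have "finite Fin" "finite Fout"
    using F(2) unfolding Fin_def Fout_def by auto
  moreover have "push_count F y u = card (Fin \<union> Fout)"
    unfolding push_count_def Fin_def Fout_def by (rule arg_cong[where f = card]) auto
  ultimately have "push_count F y u = card Fin + card Fout"
    by (simp add: card_Un_disjoint Fin_def Fout_def disjoint_iff)
  moreover have "card Fin \<le> push_count F y (a <# u)"
  proof -
    have "card Fin = card ((\<otimes>) a ` Fin)"
      using a(1) F(1) by (intro card_image[symmetric] inj_onI) (auto simp: Fin_def subset_iff)
    also have "\<dots> \<le> push_count F y (a <# u)"
      unfolding push_count_def using F y a(1) lcos_mult_moved
      by (intro card_mono) (auto simp: Fin_def)
    finally show ?thesis .
  qed
  moreover have "card Fout \<le> card {c \<in> cayley_boundary F. (\<lambda>g. g <# y) ` c = {u, a <# u}}"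
    unfolding Fout_def using card_escaping_le_boundary[OF F y a ne] .
  ultimately show ?thesis
    by linarith
qed

lemma card_level_cuts_le:
  assumes F: "F \<subseteq> carrier G" "finite F" and y: "y \<in> lcosets H" and e: "e \<in> schreier"
  shows "card {t \<in> T. e \<in> edges_between schreier (level_set F B y t) (B - level_set F B y t)}
    \<le> card {c \<in> cayley_boundary F. (\<lambda>g. g <# y) ` c = e}"
proof -
  obtain x s where x: "x \<in> lcosets H" and s: "s \<in> S" and ne: "s <# x \<noteq> x" and e: "e = {x, s <# x}"
    using e unfolding schreier_edges_def by blast
  have sG: "s \<in> carrier G"
    using s S_carrier by blast
  let ?D = "card {c \<in> cayley_boundary F. (\<lambda>g. g <# y) ` c = e}"
  let ?\<psi> = "push_count F y"
  have "?\<psi> x - ?\<psi> (s <# x) \<le> ?D"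
    unfolding e using push_count_diff_le[OF F y sG] s ne by blast
  moreover have "?\<psi> (s <# x) - ?\<psi> (inv s <# (s <# x)) \<le> ?D"
    unfolding e using push_count_diff_le[OF F y, of "inv s" "s <# x"] sG s ne
    by (simp add: lcos_inv_cancel(1)[OF sG x] insert_commute)
  then have "?\<psi> (s <# x) - ?\<psi> x \<le> ?D"
    by (simp add: lcos_inv_cancel(1)[OF sG x])
  moreover have "card {t \<in> T. e \<in> edges_between schreier (level_set F B y t) (B - level_set F B y t)}
      \<le> (?\<psi> x - ?\<psi> (s <# x)) + (?\<psi> (s <# x) - ?\<psi> x)"
    unfolding e level_set_def by (rule card_threshold_cuts_le)
  ultimately show ?thesis
    by linarith
qed

lemma sum_level_cuts_le:
  assumes F: "F \<subseteq> carrier G" "finite F" and y: "y \<in> lcosets H" and B: "B \<subseteq> lcosets H"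
    and T: "finite T"
  shows "(\<Sum>t\<in>T. card (edges_between schreier (level_set F B y t) (B - level_set F B y t)))
    \<le> card {c \<in> cayley_boundary F. (\<lambda>g. g <# y) ` c \<subseteq> B}"
proof -
  define cut where "cut t = edges_between schreier (level_set F B y t) (B - level_set F B y t)" for t
  define SB where "SB = {e \<in> schreier. e \<subseteq> B}"
  define D where "D e = {c \<in> cayley_boundary F. (\<lambda>g. g <# y) ` c = e}" for e
  have "finite B"
    using B finite_lcosets finite_subset by blast
  then have finSB: "finite SB"
    unfolding SB_def by (rule rev_finite_subset[OF finite_Pow_iff[THEN iffD2]]) auto
  have cut_SB: "cut t \<subseteq> SB" for t
    unfolding cut_def SB_def edges_between_def level_set_def by auto
  have finD: "finite (D e)" for e
    unfolding D_def using finite_edge_boundary_cayley[OF F(2)] by simp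
  have "(\<Sum>t\<in>T. card (cut t)) = (\<Sum>t\<in>T. card {e \<in> SB. e \<in> cut t})"
    using cut_SB by (intro sum.cong) (auto intro: arg_cong[where f = card])
  also have "\<dots> = (\<Sum>e\<in>SB. card {t \<in> T. e \<in> cut t})"
    by (rule sum_multicount_gen[OF T finSB]) simp
  also have "\<dots> \<le> (\<Sum>e\<in>SB. card (D e))"
    unfolding cut_def D_def SB_def using card_level_cuts_le[OF F y] by (intro sum_mono) auto
  also have "\<dots> = card (\<Union>e\<in>SB. D e)"
    using finSB finD by (intro card_UN_disjoint[symmetric]) (auto simp: D_def)
  also have "\<dots> \<le> card {c \<in> cayley_boundary F. (\<lambda>g. g <# y) ` c \<subseteq> B}"
    using finite_edge_boundary_cayley[OF F(2)] by (intro card_mono) (auto simp: D_def SB_def)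
  finally show ?thesis
    unfolding cut_def .
qed

lemma sum_boundary_images_le:
  assumes "finite F" "finite B"
  shows "(\<Sum>y\<in>lcosets H. card {c \<in> cayley_boundary F. (\<lambda>g. g <# y) ` c \<subseteq> B})
    \<le> card (cayley_boundary F) * card B"
proof -
  have "(\<Sum>y\<in>lcosets H. card {c \<in> cayley_boundary F. (\<lambda>g. g <# y) ` c \<subseteq> B})
      = (\<Sum>c\<in>cayley_boundary F. card {y \<in> lcosets H. (\<lambda>g. g <# y) ` c \<subseteq> B})"
    by (rule sum_multicount_gen[OF finite_lcosets finite_edge_boundary_cayley[OF assms(1)]]) simp
  also have "\<dots> \<le> (\<Sum>c\<in>cayley_boundary F. card B)"
  proof (rule sum_mono)
    fix c assume "c \<in> cayley_boundary F"
    then obtain g s where c: "c = {g, s \<otimes> g}" and g: "g \<in> carrier G"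
      unfolding edge_boundary_def cayley_edges_def by blast
    have "card {y \<in> lcosets H. (\<lambda>g. g <# y) ` c \<subseteq> B} \<le> card {y \<in> lcosets H. g <# y \<in> B}"
      using finite_lcosets by (intro card_mono) (auto simp: c)
    also have "\<dots> \<le> card B"
      using card_lcosets_moved_into_le[OF g assms(2)] .
    finally show "card {y \<in> lcosets H. (\<lambda>g. g <# y) ` c \<subseteq> B} \<le> card B" .
  qed
  finally show ?thesis
    by simp
qed

lemma sum_card_level_sets:
  assumes F: "F \<subseteq> carrier G" "finite F" and B: "B \<subseteq> lcosets H"
  shows "(\<Sum>y\<in>lcosets H. \<Sum>t\<in>{1..card F}. card (level_set F B y t)) = card B * card F"
proof -
  have finB: "finite B"
    using B finite_lcosets finite_subset by blast
  have level_sum: "(\<Sum>t\<in>{1..card F}. card (level_set F B y t)) = (\<Sum>x\<in>B. push_count F y x)" for y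
  proof -
    have "card {t \<in> {1..card F}. t \<le> push_count F y x} = push_count F y x" for x
    proof -
      have "push_count F y x \<le> card F"
        unfolding push_count_def using F(2) by (intro card_mono) auto
      then have "{t \<in> {1..card F}. t \<le> push_count F y x} = {1..push_count F y x}"
        by auto
      then show ?thesis
        by simp
    qed
    then show ?thesis
      unfolding level_set_def by (intro sum_multicount_gen finB) auto
  qed
  have count_sum: "(\<Sum>y\<in>lcosets H. push_count F y x) = card F" if "x \<in> B" for x
  proof -
    have "(\<Sum>y\<in>lcosets H. push_count F y x) = 1 * card F"
      unfolding push_count_def using F B that card_lcosets_moved_to
      by (intro sum_multicount finite_lcosets) auto
    then show ?thesis
      by simp
  qed
  have "(\<Sum>y\<in>lcosets H. \<Sum>t\<in>{1..card F}. card (level_set F B y t))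
      = (\<Sum>x\<in>B. \<Sum>y\<in>lcosets H. push_count F y x)"
    unfolding level_sum by (rule sum.swap)
  also have "\<dots> = card B * card F"
    using count_sum by simp
  finally show ?thesis .
qed

lemma sum_level_cuts_total_le:
  assumes F: "F \<subseteq> carrier G" "finite F" and B: "B \<subseteq> lcosets H"
  shows "(\<Sum>y\<in>lcosets H. \<Sum>t\<in>{1..card F}.
      card (edges_between schreier (level_set F B y t) (B - level_set F B y t)))
    \<le> card (cayley_boundary F) * card B"
proof -
  have "(\<Sum>y\<in>lcosets H. \<Sum>t\<in>{1..card F}.
      card (edges_between schreier (level_set F B y t) (B - level_set F B y t)))
    \<le> (\<Sum>y\<in>lcosets H. card {c \<in> cayley_boundary F. (\<lambda>g. g <# y) ` c \<subseteq> B})"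
    using sum_level_cuts_le[OF F _ B] by (intro sum_mono) simp
  also have "\<dots> \<le> card (cayley_boundary F) * card B"
    using sum_boundary_images_le[OF F(2)] B finite_lcosets finite_subset by blast
  finally show ?thesis .
qed

lemma card_level_set_le:
  assumes "finite F" "1 \<le> t"
  shows "card (level_set F B y t) \<le> card F"
proof -
  have "level_set F B y t \<subseteq> (\<lambda>f. f <# y) ` F"
  proof
    fix x assume "x \<in> level_set F B y t"
    then have "0 < push_count F y x"
      using assms(2) unfolding level_set_def by auto
    then have "{f \<in> F. f <# y = x} \<noteq> {}"
      unfolding push_count_def by (metis card.empty less_irrefl)
    then show "x \<in> (\<lambda>f. f <# y) ` F"
      by blast
  qed
  then have "card (level_set F B y t) \<le> card ((\<lambda>f. f <# y) ` F)"
    by (rule card_mono[OF finite_imageI[OF assms(1)]])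
  also have "\<dots> \<le> card F"
    by (rule card_image_le[OF assms(1)])
  finally show ?thesis .
qed

lemma ex_small_cut_subset:
  assumes F: "F \<subseteq> carrier G" "finite F" "F \<noteq> {}" and B: "B \<subseteq> lcosets H" "B \<noteq> {}"
  obtains P where "P \<subseteq> B" "P \<noteq> {}" "card P \<le> card F"
    "card F * card (edges_between schreier P (B - P)) \<le> card (cayley_boundary F) * card P"
proof -
  define I where "I = (lcosets H) \<times> {1..card F}"
  define weight where "weight p = card (level_set F B (fst p) (snd p))" for p
  define cut where "cut p = card (edges_between schreier (level_set F B (fst p) (snd p))
    (B - level_set F B (fst p) (snd p)))" for p
  have "sum weight I = card B * card F"
    using sum_card_level_sets[OF F(1,2) B(1)]
    unfolding I_def weight_def by (simp add: sum.cartesian_product split_def)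
  moreover have "sum cut I \<le> card (cayley_boundary F) * card B"
    using sum_level_cuts_total_le[OF F(1,2) B(1)]
    unfolding I_def cut_def by (simp add: sum.cartesian_product split_def)
  ultimately have "card F * sum cut I \<le> card (cayley_boundary F) * sum weight I"
    by (simp add: ac_simps)
  moreover have "0 < sum weight I"
    using \<open>sum weight I = card B * card F\<close> F(2,3) B finite_lcosets finite_subset
    by (simp add: card_gt_0_iff)
  moreover have "finite I"
    unfolding I_def using finite_lcosets by simp
  ultimately have "\<exists>p\<in>I. 0 < weight p \<and> card F * cut p \<le> card (cayley_boundary F) * weight p"
    by (intro ex_ratio_le_of_sums)
  then obtain y t where p: "(y, t) \<in> I" "0 < weight (y, t)"
    "card F * cut (y, t) \<le> card (cayley_boundary F) * weight (y, t)"
    by auto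
  show ?thesis
  proof (rule that)
    show "level_set F B y t \<subseteq> B"
      unfolding level_set_def by blast
    show "level_set F B y t \<noteq> {}"
      using p(2) unfolding weight_def by auto
    show "card (level_set F B y t) \<le> card F"
      using p(1) F(2) unfolding I_def by (intro card_level_set_le) auto
    show "card F * card (edges_between schreier (level_set F B y t) (B - level_set F B y t))
      \<le> card (cayley_boundary F) * card (level_set F B y t)"
      using p(3) unfolding weight_def cut_def by simp
  qed
qed

lemma ex_small_cut_extension:
  assumes F: "F \<subseteq> carrier G" "finite F" "F \<noteq> {}" and B: "B \<subseteq> lcosets H"
    and B1: "B1 \<subseteq> B" "card B1 < card B"
    and cut1: "card F * card (edges_between schreier B1 (B - B1)) \<le> card (cayley_boundary F) * card B1"
  obtains B1' where "B1' \<subseteq> B" "card B1 < card B1'" "card B1' \<le> card B1 + card F"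
    "card F * card (edges_between schreier B1' (B - B1')) \<le> card (cayley_boundary F) * card B1'"
proof -
  have finB: "finite B"
    using B finite_lcosets finite_subset by blast
  have "B - B1 \<noteq> {}"
    using B1 by auto
  then obtain P where P: "P \<subseteq> B - B1" "P \<noteq> {}" "card P \<le> card F"
    and cutP: "card F * card (edges_between schreier P (B - B1 - P)) \<le> card (cayley_boundary F) * card P"
    using ex_small_cut_subset[OF F, of "B - B1"] B by blast
  have fin: "finite B1" "finite P"
    using B1(1) P(1) finB finite_subset by blast+
  then have card_Un: "card (B1 \<union> P) = card B1 + card P"
    using P(1) by (subst card_Un_disjoint) auto
  have "P \<subseteq> B"
    using P(1) by blast
  then have "card F * card (edges_between schreier (B1 \<union> P) (B - (B1 \<union> P)))
      \<le> card F * (card (edges_between schreier B1 (B - B1))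
        + card (edges_between schreier P (B - B1 - P)))"
    using card_edges_between_Un_le[OF B1(1) _ finB] by (intro mult_le_mono2)
  also have "\<dots> \<le> card (cayley_boundary F) * card (B1 \<union> P)"
    using cut1 cutP unfolding card_Un by (simp add: add_mult_distrib2)
  finally show ?thesis
    using that[of "B1 \<union> P"] B1(1) \<open>P \<subseteq> B\<close> card_Un P(2,3) fin by (simp add: card_gt_0_iff)
qed

lemma ex_subset_small_cut:
  assumes F: "F \<subseteq> carrier G" "finite F" "F \<noteq> {}" and B: "B \<subseteq> lcosets H"
  shows "k \<le> card B \<Longrightarrow> \<exists>B1 \<subseteq> B. k \<le> card B1 \<and> card B1 < k + card F \<and>
    card F * card (edges_between schreier B1 (B - B1)) \<le> card (cayley_boundary F) * card B1"
proof (induction k)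
  case 0
  have "edges_between schreier {} B = {}"
    by (simp add: edges_between_def)
  then show ?case
    using F by (intro exI[of _ "{}"]) (auto simp: card_gt_0_iff)
next
  case (Suc k)
  obtain B1 where B1: "B1 \<subseteq> B" "k \<le> card B1" "card B1 < k + card F"
    and cut1: "card F * card (edges_between schreier B1 (B - B1)) \<le> card (cayley_boundary F) * card B1"
    using Suc by auto
  show ?case
  proof (cases "Suc k \<le> card B1")
    case True
    then show ?thesis
      using B1 cut1 by (intro exI[of _ B1]) auto
  next
    case False
    then have "card B1 = k" "card B1 < card B"
      using B1(2) Suc.prems by auto
    then obtain B1' where "B1' \<subseteq> B" "k < card B1'" "card B1' \<le> k + card F"
      "card F * card (edges_between schreier B1' (B - B1')) \<le> card (cayley_boundary F) * card B1'"
      using ex_small_cut_extension[OF F B B1(1) _ cut1] by metis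
    then show ?thesis
      by (intro exI[of _ B1']) auto
  qed
qed

lemma ex_balanced_split:
  assumes B: "B \<subseteq> lcosets H" and two: "2 \<le> card B"
    and M: "M < real (card B)" "real (card B) \<le> 4/3 * M"
  obtains B1 B2 where "B = B1 \<union> B2" "B1 \<inter> B2 = {}" "real (card B1) \<le> M" "real (card B2) \<le> M"
    "real (card (edges_between schreier B1 B2)) \<le> folner_profile G S (M / 4) * M"
proof -
  have finB: "finite B"
    using B finite_lcosets finite_subset by blast
  obtain F where F: "F \<subseteq> carrier G" "finite F" "F \<noteq> {}" "real (card F) \<le> max (M / 4) 1"
    and ratio: "real (card (cayley_boundary F)) / real (card F) = folner_profile G S (M / 4)"
    using folner_profile_attained .
  define m where "m = nat \<lfloor>M\<rfloor>"
  txt \<open>\<open>M \<ge> 3/2\<close> makes \<open>|F| \<le> max (M/4) 1 \<le> 2M/3\<close>, so the overshoot of the greedy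
    piece \<open>B\<^sub>1\<close> beyond \<open>|B| - m\<close> still leaves \<open>|B\<^sub>1| \<le> M\<close>.\<close>
  have "3/2 \<le> M"
    using two M(2) by linarith
  then have m: "real m \<le> M" "M < real m + 1"
    unfolding m_def by linarith+
  obtain B1 where B1: "B1 \<subseteq> B" "card B - m \<le> card B1" "card B1 < card B - m + card F"
    and cut: "card F * card (edges_between schreier B1 (B - B1)) \<le> card (cayley_boundary F) * card B1"
    using ex_subset_small_cut[OF F(1-3) B, of "card B - m"] by auto
  have finB1: "finite B1"
    using B1(1) finB finite_subset by blast
  have "m < card B"
    using m M(1) by linarith
  then have "card (B - B1) \<le> m"
    using B1(1,2) finB1 by (simp add: card_Diff_subset)
  then have card2: "real (card (B - B1)) \<le> M"
    using m by linarith
  have "real (card B1) + 1 \<le> real (card B) - real m + real (card F)"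
    using B1(3) \<open>m < card B\<close> by linarith
  then have card1: "real (card B1) \<le> M"
    using m M(2) F(4) \<open>3/2 \<le> M\<close> by (auto simp: max_def split: if_splits)
  have "0 < real (card F)"
    using F(2,3) by (simp add: card_gt_0_iff)
  then have "real (card (edges_between schreier B1 (B - B1)))
      \<le> real (card (cayley_boundary F)) / real (card F) * real (card B1)"
    using cut by (simp add: field_simps) (metis of_nat_le_iff of_nat_mult)
  also have "\<dots> \<le> folner_profile G S (M / 4) * M"
    unfolding ratio using card1 folner_profile_nonneg by (rule mult_left_mono)
  finally show ?thesis
    using that[of B1 "B - B1"] B1(1) card1 card2 by auto
qed

section \<open>Recursive splitting\<close>

definition folner_term :: "nat \<Rightarrow> nat \<Rightarrow> real" where
  "folner_term n k = folner_profile G S ((3/4) ^ Suc k * real n / 4) * ((3/4) ^ Suc k * real n)"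

lemma folner_term_nonneg: "0 \<le> folner_term n k"
  unfolding folner_term_def using folner_profile_nonneg by simp

lemma summable_folner_term: "summable (folner_term n)"
proof (rule summable_comparison_test')
  have "summable (\<lambda>k. (3/4 :: real) ^ Suc k)"
    by (subst summable_Suc_iff) (simp add: summable_geometric)
  then show "summable (\<lambda>k. 2 * real (card S) * ((3/4) ^ Suc k * real n))"
    by (intro summable_mult summable_mult2)
  show "norm (folner_term n k) \<le> 2 * real (card S) * ((3/4) ^ Suc k * real n)" for k
  proof -
    have "folner_term n k \<le> 2 * real (card S) * ((3/4) ^ Suc k * real n)"
      unfolding folner_term_def by (rule mult_right_mono[OF folner_profile_le]) simp
    then show ?thesis
      unfolding real_norm_def abs_of_nonneg[OF folner_term_nonneg] .
  qed
qed

lemma folner_tail_nonneg: "0 \<le> (\<Sum>k. folner_term n (k + j))"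
  using summable_ignore_initial_segment[OF summable_folner_term] folner_term_nonneg
  by (intro suminf_nonneg) auto

lemma sweepwidth_le_folner_tail:
  assumes "B \<subseteq> lcosets H" "real (card B) \<le> (3/4) ^ j * real n"
  shows "real (sweepwidth schreier B) \<le> 6 + (\<Sum>k. folner_term n (k + j))"
  using assms
proof (induction "card B" arbitrary: B j rule: less_induct)
  case less
  have finB: "finite B"
    using less.prems(1) finite_lcosets finite_subset by blast
  show ?case
  proof (cases "card B \<le> 5")
    case True
    then show ?thesis
      using sweepwidth_le_6[OF finB True, of schreier] folner_tail_nonneg[of n j] by simp
  next
    case False
    obtain i where i: "j \<le> i" "real (card B) \<le> real n * (3/4) ^ i"
      "real n * (3/4) ^ Suc i < real (card B)"
      using ex_power_bracket[of "real (card B)" "real n" "3/4" j] False less.prems(2)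
      by (auto simp: mult.commute)
    define M where "M = (3/4) ^ Suc i * real n"
    have "real (card B) \<le> 4/3 * M"
      using i(2) unfolding M_def by simp
    then obtain B1 B2 where B: "B = B1 \<union> B2" "B1 \<inter> B2 = {}"
      and card: "real (card B1) \<le> M" "real (card B2) \<le> M"
      and cut: "real (card (edges_between schreier B1 B2)) \<le> folner_term n i"
      using ex_balanced_split[OF less.prems(1), of M] False i(3)
      unfolding M_def folner_term_def by (auto simp: mult.commute)
    have "real (sweepwidth schreier B1) \<le> 6 + (\<Sum>k. folner_term n (k + Suc i))"
      "real (sweepwidth schreier B2) \<le> 6 + (\<Sum>k. folner_term n (k + Suc i))"
      using less.hyps[of B1 "Suc i"] less.hyps[of B2 "Suc i"] less.prems(1) B card i(3)
      unfolding M_def by (auto simp: mult.commute)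
    moreover have "sweepwidth schreier B
        \<le> max (sweepwidth schreier B1) (sweepwidth schreier B2) + card (edges_between schreier B1 B2)"
      using sweepwidth_Un_le[of B1 B2 schreier] B finB by simp
    ultimately have "real (sweepwidth schreier B)
        \<le> 6 + (\<Sum>k. folner_term n (k + Suc i)) + folner_term n i"
      using cut by linarith
    also have "\<dots> \<le> 6 + (\<Sum>k. folner_term n (k + j))"
      using suminf_shift_Suc_le[OF summable_folner_term[of n] folner_term_nonneg i(1)] by linarith
    finally show ?thesis .
  qed
qed

end

theorem theorem2p6:
  fixes G :: "('g, 'm) monoid_scheme" and S H :: "'g set" and A :: "'g set set"
  assumes "group G"
    and "finite S" and "S \<subseteq> carrier G" and "\<forall>s\<in>S. inv\<^bsub>G\<^esub> s \<in> S"
    and "generate G S = carrier G"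
    and "subgroup H G" and "finite (lcosets\<^bsub>G\<^esub> H)"
    and "A \<subseteq> lcosets\<^bsub>G\<^esub> H"
  shows "real (sweepwidth (schreier_edges G S H) A)
    \<le> 6 + 2 * (\<Sum>k. folner_profile G S ((1/4) * (3/4) ^ (Suc k) * real (card A))
                   * ((3/4) ^ (Suc k) * real (card A)))"
proof -
  interpret schreier_graph G S H
    using assms by (simp add: schreier_graph_def schreier_graph_axioms_def
        cayley_graph_def cayley_graph_axioms_def)
  have "real (sweepwidth schreier A) \<le> 6 + (\<Sum>k. folner_term (card A) k)"
    using sweepwidth_le_folner_tail[of A 0 "card A"] assms(8) by simp
  also have "\<dots> \<le> 6 + 2 * (\<Sum>k. folner_term (card A) k)"
    using folner_tail_nonneg[of "card A" 0] by simp
  finally have "real (sweepwidth schreier A) \<le> 6 + 2 * (\<Sum>k. folner_term (card A) k)" .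
  then show ?thesis
    unfolding folner_term_def by (simp add: mult.commute)
qed

end
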